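(* For $n\ge1$ define the $\mathbb{K}$-linear endomorphism $P_{\mu,n}$ of $M(\mu)\otimes V_1^{\otimes n}$ by \[ P_{\mu,n}=\frac{F_{\mu,n-1}\,F_{\mu+1,n-2}\cdots F_{\mu+n-2,1}\,F_{\mu+n-1}\;E_{\mu+n-1}\,E_{\mu+n-2,1}\cdots E_{\mu+1,n-2}\,E_{\mu,n-1}}{[\mu+n][\mu+n-1]\cdots[\mu+1]} \] (so $P_{\mu,1}=F_\mu E_\mu/[\mu+1]$). Then $P_{\mu,n}$ is a $U_q(\mathfrak{sl}_2)$-module endomorphism of $M(\mu)\otimes V_1^{\otimes n}$ satisfying $P_{\mu,n}^2=P_{\mu,n}$, and, for $n\ge2$ and every $i=1,\dots,n-1$, \[ \varepsilon_i\circ P_{\mu,n}=0,\qquad P_{\mu,n}\circ\eta_i=0, \] where $\varepsilon_i=\mathrm{Id}_{M(\mu)}\otimes\mathrm{Id}_{V_1}^{\otimes(i-1)}\otimes\varepsilon\otimes\mathrm{Id}_{V_1}^{\otimes(n-i-1)}: M(\mu)\otimes V_1^{\otimes n}\to M(\mu)\otimes V_1^{\otimes(n-2)}$ and $\eta_i=\mathrm{Id}_{M(\mu)}\otimes\mathrm{Id}_{V_1}^{\otimes(i-1)}\otimes\eta\otimes\mathrm{Id}_{V_1}^{\otimes(n-i-1)}: M(\mu)\otimes V_1^{\otimes (n-2)}\to M(\mu)\otimes V_1^{\otimes n}$ (acting on the $i$-th and $(i+1)$-st tensor factors $V_1$).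
   Context: Let $\mathbb{K}=\mathbb{C}(q,q^{\mu})$, where $q$ and $q^{\mu}$ are algebraically independent indeterminates; $[a]=\frac{q^{a}-q^{-a}}{q-q^{-1}}$ (so $[\mu+k]\neq0$ for integers $k$). $U_q(\mathfrak{sl}_2)$ is generated by $K^{\pm1},E,F$ with $KK^{-1}=K^{-1}K=1$, $KE=q^2EK$, $KF=q^{-2}FK$, $EF-FE=\frac{K-K^{-1}}{q-q^{-1}}$ and coproduct $\Delta(K^{\pm1})=K^{\pm1}\otimes K^{\pm1}$, $\Delta(F)=F\otimes1+K^{-1}\otimes F$, $\Delta(E)=E\otimes K+1\otimes E$; tensor products of modules carry the induced action. $V_1$ is the 2-dimensional module with basis $v_0,v_1$: $Kv_0=qv_0$, $Kv_1=q^{-1}v_1$, $Ev_0=0$, $Ev_1=v_0$, $Fv_0=v_1$, $Fv_1=0$. For $\lambda=\mu+k$ ($k\in\mathbb{Z}$), the Verma module $M(\lambda)$ has $\mathbb{K}$-basis $v_0,v_1,\dots$ with $Kv_i=q^{\lambda-2i}v_i$, $Ev_i=[i]v_{i-1}$, $Fv_i=[\lambda-i]v_{i+1}$, $v_{-1}=0$. For each such $\lambda$, the module maps $E_\lambda: M(\lambda)\otimes V_1\to M(\lambda+1)$ and $F_\lambda: M(\lambda+1)\to M(\lambda)\otimes V_1$ are defined by $E_\lambda(v_i\otimes v_0)=q^iv_i$, $E_\lambda(v_i\otimes v_1)=v_{i+1}$, $F_\lambda(v_i)=[\lambda+1-i]\,v_i\otimes v_0+q^{i-\lambda-1}[i]\,v_{i-1}\otimes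 v_1$. For $j\ge0$, $E_{\lambda,j}=E_\lambda\otimes\mathrm{Id}_{V_1}^{\otimes j}$ and $F_{\lambda,j}=F_\lambda\otimes\mathrm{Id}_{V_1}^{\otimes j}$ (with $E_{\lambda,0}=E_\lambda$, $F_{\lambda,0}=F_\lambda$); compositions are read right to left. The module maps $\varepsilon: V_1\otimes V_1\to\mathbb{K}$ and $\eta:\mathbb{K}\to V_1\otimes V_1$ are given by $\varepsilon(v_0\otimes v_0)=\varepsilon(v_1\otimes v_1)=0$, $\varepsilon(v_0\otimes v_1)=-q$, $\varepsilon(v_1\otimes v_0)=1$, and $\eta(1)=v_0\otimes v_1-q^{-1}v_1\otimes v_0$; tensoring with $\mathbb{K}$ is identified with the identity. *)

theory Defs
  imports "HOL-Computational_Algebra.Polynomial" "HOL-Computational_Algebra.Fraction_Field"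
begin

text \<open>K is the fraction field of C[q][Q], where Q stands for q^mu; the two
indeterminates are algebraically independent.\<close>

type_synonym K = "complex poly poly fract"

definition qq :: K where "qq = Fract [:[:0, 1:]:] 1"
definition qmu :: K where "qmu = Fract [:0, 1:] 1"

text \<open>Quantum integers: qint a = [a] for an integer a, and qbr k = [mu + k].\<close>
definition qint :: "int \<Rightarrow> K" where
  "qint a = (qq powi a - qq powi (- a)) / (qq - inverse qq)"
definition qbr :: "int \<Rightarrow> K" where
  "qbr k = (qmu * qq powi k - inverse (qmu * qq powi k)) / (qq - inverse qq)"

text \<open>A vector is a finitely supported coefficient function on a basis.
A linear map is given by its matrix m, where m b c is the coefficient of the
basis vector c in the image of the basis vector b.\<close>

definition lin :: "('b \<Rightarrow> 'c \<Rightarrow> K) \<Rightarrow> ('b \<Rightarrow> K) \<Rightarrow> ('c \<Rightarrow> K)" where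
  "lin m v = (\<lambda>c. \<Sum>b\<in>{b. v b \<noteq> 0}. v b * m b c)"

text \<open>Basis of M(mu+k) \<otimes> V_1^{\<otimes> n}: pairs (i, s) with s a list of length n;
v_i \<otimes> v_{s_1} \<otimes> ... \<otimes> v_{s_n}, where False stands for v_0 and True for v_1.\<close>

definition Vsp :: "nat \<Rightarrow> (nat \<times> bool list \<Rightarrow> K) set" where
  "Vsp n = {v. finite {b. v b \<noteq> 0} \<and> (\<forall>i s. v (i, s) \<noteq> 0 \<longrightarrow> length s = n)}"

datatype gen = GK | GKi | GE | GF

text \<open>Action on the Verma module M(mu+k): matrix coefficient from v_i to v_j.\<close>
fun Mmat :: "int \<Rightarrow> gen \<Rightarrow> nat \<Rightarrow> nat \<Rightarrow> K" where
  "Mmat k GK i j = (if j = i then qmu * qq powi (k - 2 * int i) else 0)"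
| "Mmat k GKi i j = (if j = i then inverse (qmu * qq powi (k - 2 * int i)) else 0)"
| "Mmat k GE i j = (if j + 1 = i then qint (int i) else 0)"
| "Mmat k GF i j = (if j = i + 1 then qbr (k - int i) else 0)"

fun Vmat :: "gen \<Rightarrow> bool \<Rightarrow> bool \<Rightarrow> K" where
  "Vmat GK t u = (if t = u then (if t then inverse qq else qq) else 0)"
| "Vmat GKi t u = (if t = u then (if t then qq else inverse qq) else 0)"
| "Vmat GE t u = (if t \<and> \<not> u then 1 else 0)"
| "Vmat GF t u = (if \<not> t \<and> u then 1 else 0)"

text \<open>Action on M(mu+k) \<otimes> V_1^{\<otimes> n} = (M(mu+k) \<otimes> V_1^{\<otimes>(n-1)}) \<otimes> V_1 via the coproduct
Delta(K^{\<plusminus>1}) = K^{\<plusminus>1} \<otimes> K^{\<plusminus>1}, Delta(E) = E \<otimes> K + 1 \<otimes> E, Delta(F) = F \<otimes> 1 + K^{-1} \<otimes> F.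
The lists here are reversed, so the head is the last tensor factor.\<close>
fun TR :: "int \<Rightarrow> gen \<Rightarrow> nat \<Rightarrow> bool list \<Rightarrow> nat \<Rightarrow> bool list \<Rightarrow> K" where
  "TR k g i [] j [] = Mmat k g i j"
| "TR k g i (t # r) j (u # r') =
     (case g of
        GK \<Rightarrow> TR k GK i r j r' * Vmat GK t u
      | GKi \<Rightarrow> TR k GKi i r j r' * Vmat GKi t u
      | GE \<Rightarrow> TR k GE i r j r' * Vmat GK t u + (if i = j \<and> r = r' then 1 else 0) * Vmat GE t u
      | GF \<Rightarrow> TR k GF i r j r' * (if t = u then 1 else 0) + TR k GKi i r j r' * Vmat GF t u)"
| "TR k g i (t # r) j [] = 0"
| "TR k g i [] j (u # r') = 0"

definition act :: "int \<Rightarrow> gen \<Rightarrow> (nat \<times> bool list \<Rightarrow> K) \<Rightarrow> (nat \<times> bool list \<Rightarrow> K)" where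
  "act k g = lin (\<lambda>(i, s) (j, s'). TR k g i (rev s) j (rev s'))"

text \<open>E_{mu+k} \<otimes> Id^{\<otimes> j}: M(mu+k) \<otimes> V_1 \<otimes> V_1^{\<otimes> j} \<rightarrow> M(mu+k+1) \<otimes> V_1^{\<otimes> j};
E_lambda(v_i \<otimes> v_0) = q^i v_i, E_lambda(v_i \<otimes> v_1) = v_{i+1} (independent of lambda).\<close>
fun Emap :: "int \<Rightarrow> nat \<times> bool list \<Rightarrow> nat \<times> bool list \<Rightarrow> K" where
  "Emap k (i, []) (j, s') = 0"
| "Emap k (i, t # r) (j, s') =
     (if s' = r then (if t then (if j = i + 1 then 1 else 0)
                      else (if j = i then qq ^ i else 0)) else 0)"

text \<open>F_{mu+k} \<otimes> Id^{\<otimes> j}: M(mu+k+1) \<otimes> V_1^{\<otimes> j} \<rightarrow> M(mu+k) \<otimes> V_1 \<otimes> V_1^{\<otimes> j};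
F_lambda(v_i) = [lambda+1-i] v_i \<otimes> v_0 + q^{i-lambda-1} [i] v_{i-1} \<otimes> v_1.\<close>
fun Fmap :: "int \<Rightarrow> nat \<times> bool list \<Rightarrow> nat \<times> bool list \<Rightarrow> K" where
  "Fmap k (i, r) (j, []) = 0"
| "Fmap k (i, r) (j, u # r') =
     (if r' = r then (if \<not> u then (if j = i then qbr (k + 1 - int i) else 0)
                      else (if j + 1 = i then inverse qmu * qq powi (int i - k - 1) * qint (int i)
                            else 0)) else 0)"

text \<open>P_{mu,n} = F_{mu,n-1} ... F_{mu+n-1} E_{mu+n-1} ... E_{mu,n-1} / ([mu+n]...[mu+1]).
The E's are applied first, starting with E_{mu,n-1}.\<close>
definition Ecomp :: "nat \<Rightarrow> (nat \<times> bool list \<Rightarrow> K) \<Rightarrow> (nat \<times> bool list \<Rightarrow> K)" where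
  "Ecomp n v = fold (\<lambda>j w. lin (Emap (int j)) w) [0..<n] v"
definition Fcomp :: "nat \<Rightarrow> (nat \<times> bool list \<Rightarrow> K) \<Rightarrow> (nat \<times> bool list \<Rightarrow> K)" where
  "Fcomp n v = fold (\<lambda>j w. lin (Fmap (int j)) w) (rev [0..<n]) v"
definition Pmap :: "nat \<Rightarrow> (nat \<times> bool list \<Rightarrow> K) \<Rightarrow> (nat \<times> bool list \<Rightarrow> K)" where
  "Pmap n v = (\<lambda>b. inverse (\<Prod>j=1..n. qbr (int j)) * Fcomp n (Ecomp n v) b)"

section \<open>Cup and cap maps on the i-th and (i+1)-st factors V_1 (i is 1-based)\<close>

fun epsV :: "bool \<Rightarrow> bool \<Rightarrow> K" where
  "epsV False True = - qq"
| "epsV True False = 1"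
| "epsV _ _ = 0"

definition eps_map :: "nat \<Rightarrow> nat \<times> bool list \<Rightarrow> nat \<times> bool list \<Rightarrow> K" where
  "eps_map i = (\<lambda>(a, s) (b, s').
     if b = a \<and> i < length s \<and> s' = take (i - 1) s @ drop (i + 1) s
     then epsV (s ! (i - 1)) (s ! i) else 0)"

definition eta_map :: "nat \<Rightarrow> nat \<times> bool list \<Rightarrow> nat \<times> bool list \<Rightarrow> K" where
  "eta_map i = (\<lambda>(a, s) (b, s').
     if b = a \<and> s' = take (i - 1) s @ [False, True] @ drop (i - 1) s then 1
     else if b = a \<and> s' = take (i - 1) s @ [True, False] @ drop (i - 1) s then - inverse qq
     else 0)"

end

theory Submission
  imports Defs
begin

text \<open>E_lambda and F_lambda are module maps, and E_lambda F_lambda is the scalar [lambda + 1] on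
M(lambda + 1). Hence the chain of E's composed with the chain of F's is [mu + n] ... [mu + 1], so
P_{mu,n} is an idempotent module endomorphism. Moreover F_lambda F_{lambda+1} lands in the kernel
of the cap on the first two factors V_1 and E_{lambda+1} E_lambda kills the image of the cup there;
a cap (cup) on later factors moves past one F (E) to the previous position, so every cap vanishes
on the image of the F chain and every cup is killed by the E chain.\<close>

lemma qq_nonzero [simp]: "qq \<noteq> 0"
  by (simp add: qq_def Zero_fract_def eq_fract)

lemma qmu_nonzero [simp]: "qmu \<noteq> 0"
  by (simp add: qmu_def Zero_fract_def eq_fract)

lemma qq_square_neq_one: "qq * qq \<noteq> 1"
proof
  assume "qq * qq = 1"
  hence "[:[:0, 1:]:] * [:[:0, 1:]:] = (1 :: complex poly poly)"
    by (simp add: qq_def One_fract_def eq_fract)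
  hence "coeff (coeff ([:[:0, 1:]:] * [:[:0, 1:]:]) 0) 2 = coeff (coeff (1 :: complex poly poly) 0) 2"
    by simp
  thus False by (simp add: numeral_2_eq_2)
qed

text \<open>The denominator of all quantum integers, kept as an atom so that field_simps
can cancel it instead of expanding it.\<close>
definition qd :: K where "qd = qq * qq - 1"

lemma qd_nonzero [simp]: "qd \<noteq> 0"
  using qq_square_neq_one by (simp add: qd_def)

lemma qbr_eq: "qbr a = (qmu * qmu * (qq powi a * qq powi a) - 1) * qq / (qmu * qq powi a * qd)"
  unfolding qbr_def qd_def using qq_square_neq_one by (simp add: field_simps)

lemma qint_eq: "qint a = (qq powi a * qq powi a - 1) * qq / (qq powi a * qd)"
  unfolding qint_def qd_def using qq_square_neq_one by (simp add: field_simps power_int_minus)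

lemma qq_powi_double: "qq powi (2 * a) = qq powi a * qq powi a"
  by (simp add: power_int_mult power2_eq_square power_int_mult_distrib)

lemmas qq_field_normal =
  qbr_eq qint_eq qq_powi_double power_int_add power_int_diff power_int_minus

lemma qq_power_eq_Fract: "qq ^ n = Fract ([:[:0, 1:]:] ^ n) 1"
  by (induction n) (auto simp: qq_def One_fract_def)

text \<open>[mu + k] = 0 would force (q^mu)^2 = q^(-2k), which compares a polynomial of degree 2
in the outer variable with one of degree 0.\<close>
lemma qbr_nonzero: "qbr k \<noteq> 0"
proof
  assume "qbr k = 0"
  hence e: "qmu * qmu * (qq powi k * qq powi k) = 1"
    by (simp add: qbr_eq)
  define P :: "complex poly poly" where "P = [:[:0, 1:]:]"
  define X :: "complex poly poly" where "X = [:0, 1:]"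
  have P_nonzero: "P ^ n \<noteq> 0" for n by (simp add: P_def)
  have deg_P: "degree (P ^ n * P ^ n) = 0" for n
    by (simp add: P_def degree_mult_eq degree_power_eq)
  have deg_X: "degree (X * X) = 2" by (simp add: X_def)
  show False
  proof (cases "k \<ge> 0")
    case True
    then obtain n where k: "k = int n" by (metis nonneg_eq_int)
    have "Fract (X * X * (P ^ n * P ^ n)) 1 = Fract 1 1"
      using e by (simp add: k qq_power_eq_Fract qmu_def P_def X_def One_fract_def)
    hence "X * X * (P ^ n * P ^ n) = 1" by (simp add: eq_fract)
    moreover have "degree (X * X * (P ^ n * P ^ n)) = degree (X * X) + degree (P ^ n * P ^ n)"
      by (rule degree_mult_eq) (use P_nonzero[of n] in \<open>auto simp: X_def\<close>)
    ultimately show False using deg_X deg_P[of n] by simp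
  next
    case False
    then obtain n where k: "k = - int n" by (metis linear neg_0_le_iff_le nonneg_eq_int minus_minus)
    have "Fract (X * X) (P ^ n * P ^ n) = Fract 1 1"
      using e by (simp add: k qq_power_eq_Fract qmu_def P_def X_def One_fract_def power_int_minus)
    hence "X * X = P ^ n * P ^ n" using P_nonzero by (simp add: eq_fract)
    thus False using deg_X deg_P[of n] by simp
  qed
qed

definition supp :: "('b \<Rightarrow> K) \<Rightarrow> 'b set" where
  "supp v = {b. v b \<noteq> 0}"

definition row_finite :: "('b \<Rightarrow> 'c \<Rightarrow> K) \<Rightarrow> bool" where
  "row_finite m \<longleftrightarrow> (\<forall>b. finite {c. m b c \<noteq> 0})"

definition matmul :: "('b \<Rightarrow> 'c \<Rightarrow> K) \<Rightarrow> ('c \<Rightarrow> 'd \<Rightarrow> K) \<Rightarrow> 'b \<Rightarrow> 'd \<Rightarrow> K" where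
  "matmul m1 m2 b d = (\<Sum>c\<in>{c. m1 b c \<noteq> 0}. m1 b c * m2 c d)"

lemma lin_eq_sum:
  assumes "finite A" "supp v \<subseteq> A"
  shows "lin m v c = (\<Sum>b\<in>A. v b * m b c)"
  unfolding lin_def
  by (rule sum.mono_neutral_left) (use assms in \<open>auto simp: supp_def\<close>)

lemma matmul_eq_sum:
  assumes "row_finite m1" "finite A" "\<And>x. m1 b x \<noteq> 0 \<Longrightarrow> m2 x c \<noteq> 0 \<Longrightarrow> x \<in> A"
  shows "matmul m1 m2 b c = (\<Sum>x\<in>A. m1 b x * m2 x c)"
proof -
  have row: "finite {x. m1 b x \<noteq> 0}" using assms(1) by (simp add: row_finite_def)
  have "matmul m1 m2 b c = (\<Sum>x\<in>{x. m1 b x \<noteq> 0} \<union> A. m1 b x * m2 x c)"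
    unfolding matmul_def by (rule sum.mono_neutral_left) (use row assms(2) in auto)
  also have "\<dots> = (\<Sum>x\<in>A. m1 b x * m2 x c)"
    by (rule sum.mono_neutral_right) (use row assms(2,3) in auto)
  finally show ?thesis .
qed

lemma supp_lin_subset: "supp (lin m v) \<subseteq> (\<Union>b\<in>supp v. {c. m b c \<noteq> 0})"
proof
  fix c assume "c \<in> supp (lin m v)"
  hence "(\<Sum>b\<in>{b. v b \<noteq> 0}. v b * m b c) \<noteq> 0" by (simp add: supp_def lin_def)
  then obtain b where "v b \<noteq> 0" "v b * m b c \<noteq> 0"
    using sum.neutral[of "{b. v b \<noteq> 0}" "\<lambda>b. v b * m b c"] by blast
  thus "c \<in> (\<Union>b\<in>supp v. {c. m b c \<noteq> 0})" by (auto simp: supp_def)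
qed

lemma finite_supp_lin: "finite (supp v) \<Longrightarrow> row_finite m \<Longrightarrow> finite (supp (lin m v))"
  unfolding row_finite_def by (rule finite_subset[OF supp_lin_subset]) auto

lemma lin_lincomb:
  assumes "finite (supp v)" "finite (supp w)"
  shows "lin m (\<lambda>b. c * v b + w b) = (\<lambda>x. c * lin m v x + lin m w x)"
proof
  fix x
  let ?A = "supp v \<union> supp w"
  have A: "finite ?A" using assms by simp
  have "lin m (\<lambda>b. c * v b + w b) x = (\<Sum>b\<in>?A. (c * v b + w b) * m b x)"
    by (rule lin_eq_sum[OF A]) (auto simp: supp_def)
  also have "\<dots> = c * (\<Sum>b\<in>?A. v b * m b x) + (\<Sum>b\<in>?A. w b * m b x)"
    by (simp add: sum.distrib sum_distrib_left algebra_simps)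
  also have "\<dots> = c * lin m v x + lin m w x"
    by (simp add: lin_eq_sum[OF A])
  finally show "lin m (\<lambda>b. c * v b + w b) x = c * lin m v x + lin m w x" .
qed

lemma lin_zero [simp]: "lin m (\<lambda>_. 0) = (\<lambda>_. 0)"
  by (simp add: lin_def)

lemma lin_scale: "lin m (\<lambda>b. c * v b) = (\<lambda>x. c * lin m v x)"
  by (cases "c = 0") (simp_all add: lin_def sum_distrib_left mult.assoc)

lemma lin_cong: "(\<And>b. b \<in> supp v \<Longrightarrow> m1 b = m2 b) \<Longrightarrow> lin m1 v = lin m2 v"
  unfolding lin_def supp_def by (intro ext sum.cong) auto

lemma lin_eq_zeroI: "(\<And>b c. b \<in> supp v \<Longrightarrow> m b c = 0) \<Longrightarrow> lin m v = (\<lambda>_. 0)"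
  unfolding lin_def supp_def by (intro ext sum.neutral) auto

lemma lin_scalar_matrix:
  assumes "finite (supp v)"
  shows "lin (\<lambda>b c. if c = b then x else 0) v = (\<lambda>c. x * v c)"
proof
  fix c
  have "lin (\<lambda>b c. if c = b then x else 0) v c = (\<Sum>b\<in>supp v \<union> {c}. v b * (if c = b then x else 0))"
    by (rule lin_eq_sum) (use assms in auto)
  also have "\<dots> = x * v c"
    by (subst sum.remove[of _ c]) (use assms in \<open>auto intro!: sum.neutral split: if_splits\<close>)
  finally show "lin (\<lambda>b c. if c = b then x else 0) v c = x * v c" .
qed

lemma lin_lin:
  assumes "finite (supp v)" "row_finite m1"
  shows "lin m2 (lin m1 v) = lin (matmul m1 m2) v"
proof
  fix d
  let ?S = "supp v"
  let ?T = "\<Union>b\<in>?S. {c. m1 b c \<noteq> 0}"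
  have S: "finite ?S" using assms(1) .
  have T: "finite ?T" using S assms(2) by (auto simp: row_finite_def)
  have "lin m2 (lin m1 v) d = (\<Sum>c\<in>?T. (\<Sum>b\<in>?S. v b * m1 b c) * m2 c d)"
    by (simp add: lin_eq_sum[OF T supp_lin_subset] lin_eq_sum[OF S])
  also have "\<dots> = (\<Sum>b\<in>?S. v b * (\<Sum>c\<in>?T. m1 b c * m2 c d))"
    by (simp add: sum_distrib_left sum_distrib_right mult.assoc sum.swap[of _ ?T])
  also have "\<dots> = (\<Sum>b\<in>?S. v b * matmul m1 m2 b d)"
    by (intro sum.cong refl arg_cong[where f = "\<lambda>x. _ * x"] matmul_eq_sum[symmetric, OF assms(2) T])
       auto
  also have "\<dots> = lin (matmul m1 m2) v d" by (simp add: lin_eq_sum[OF S])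
  finally show "lin m2 (lin m1 v) d = lin (matmul m1 m2) v d" .
qed

lemma Vsp_iff: "v \<in> Vsp n \<longleftrightarrow> finite (supp v) \<and> (\<forall>b\<in>supp v. length (snd b) = n)"
  unfolding Vsp_def supp_def by auto

lemma Vsp_finite_supp: "v \<in> Vsp n \<Longrightarrow> finite (supp v)"
  by (simp add: Vsp_iff)

lemma lin_in_Vsp:
  assumes "v \<in> Vsp n" "row_finite m"
    and "\<And>b c. length (snd b) = n \<Longrightarrow> m b c \<noteq> 0 \<Longrightarrow> length (snd c) = n'"
  shows "lin m v \<in> Vsp n'"
  using assms supp_lin_subset[of m v] finite_supp_lin[of v m] unfolding Vsp_iff by blast

lemma scale_in_Vsp: "v \<in> Vsp n \<Longrightarrow> (\<lambda>b. c * v b) \<in> Vsp n"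
  unfolding Vsp_def by auto

definition act_matrix :: "int \<Rightarrow> gen \<Rightarrow> nat \<times> bool list \<Rightarrow> nat \<times> bool list \<Rightarrow> K" where
  "act_matrix k g = (\<lambda>(i, s) (j, s'). TR k g i (rev s) j (rev s'))"

lemma act_eq_lin: "act k g = lin (act_matrix k g)"
  by (simp add: act_def act_matrix_def)

lemma act_matrix_apply [simp]: "act_matrix k g (i, s) (j, s') = TR k g i (rev s) j (rev s')"
  by (simp add: act_matrix_def)

lemma TR_nonzeroD: "TR k g i p j p' \<noteq> 0 \<Longrightarrow> j \<le> i + 1 \<and> length p' = length p"
proof (induction p arbitrary: p' g)
  case Nil
  thus ?case by (cases p'; cases g) (auto split: if_splits)
next
  case (Cons t p)
  then obtain u r' where "p' = u # r'" by (cases p') auto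
  with Cons show ?case by (cases g) (auto split: if_splits)
qed

lemma TR_length_neq: "length p' \<noteq> length p \<Longrightarrow> TR k g i p j p' = 0"
  using TR_nonzeroD by blast

lemma row_finite_act_matrix: "row_finite (act_matrix k g)"
  unfolding row_finite_def
proof
  fix b :: "nat \<times> bool list"
  obtain i s where b: "b = (i, s)" by (cases b)
  have "{c. act_matrix k g b c \<noteq> 0} \<subseteq> {..i+1} \<times> {s'. set s' \<subseteq> UNIV \<and> length s' = length s}"
    by (auto simp: b dest!: TR_nonzeroD)
  moreover have "finite ({..i+1} \<times> {s' :: bool list. set s' \<subseteq> UNIV \<and> length s' = length s})"
    by (intro finite_cartesian_product finite_lists_length_eq) auto
  ultimately show "finite {c. act_matrix k g b c \<noteq> 0}" by (rule finite_subset)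
qed

lemma row_finite_Emap: "row_finite (Emap k)"
  unfolding row_finite_def
proof
  fix b :: "nat \<times> bool list"
  obtain i s where b: "b = (i, s)" by (cases b)
  have "{c. Emap k b c \<noteq> 0} \<subseteq> {(i, tl s), (i + 1, tl s)}"
    by (cases s) (auto simp: b split: if_splits)
  thus "finite {c. Emap k b c \<noteq> 0}" by (rule finite_subset) auto
qed

lemma row_finite_Fmap: "row_finite (Fmap k)"
  unfolding row_finite_def
proof
  fix b :: "nat \<times> bool list"
  obtain i s where b: "b = (i, s)" by (cases b)
  have "{c. Fmap k b c \<noteq> 0} \<subseteq> {(i, False # s), (i - 1, True # s)}"
  proof
    fix c assume "c \<in> {c. Fmap k b c \<noteq> 0}"
    thus "c \<in> {(i, False # s), (i - 1, True # s)}"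
      by (cases c, rename_tac j s', case_tac s') (auto simp: b split: if_splits)
  qed
  thus "finite {c. Fmap k b c \<noteq> 0}" by (rule finite_subset) auto
qed

lemma row_finite_eps_map: "row_finite (eps_map i)"
  unfolding row_finite_def
proof
  fix b :: "nat \<times> bool list"
  obtain a s where b: "b = (a, s)" by (cases b)
  have "{c. eps_map i b c \<noteq> 0} \<subseteq> {(a, take (i - 1) s @ drop (i + 1) s)}"
    by (auto simp: b eps_map_def split: if_splits)
  thus "finite {c. eps_map i b c \<noteq> 0}" by (rule finite_subset) auto
qed

lemma row_finite_eta_map: "row_finite (eta_map i)"
  unfolding row_finite_def
proof
  fix b :: "nat \<times> bool list"
  obtain a s where b: "b = (a, s)" by (cases b)
  have "{c. eta_map i b c \<noteq> 0} \<subseteq> {(a, take (i - 1) s @ [False, True] @ drop (i - 1) s),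
      (a, take (i - 1) s @ [True, False] @ drop (i - 1) s)}"
    by (auto simp: b eta_map_def split: if_splits)
  thus "finite {c. eta_map i b c \<noteq> 0}" by (rule finite_subset) auto
qed

abbreviation Fcoeff_v0 :: "int \<Rightarrow> nat \<Rightarrow> K" where
  "Fcoeff_v0 k i \<equiv> qbr (k + 1 - int i)"

abbreviation Fcoeff_v1 :: "int \<Rightarrow> nat \<Rightarrow> K" where
  "Fcoeff_v1 k i \<equiv> inverse qmu * qq powi (int i - k - 1) * qint (int i)"

lemma Emap_Nil [simp]: "Emap k (i, []) c = 0"
  by (cases c) simp

lemma Fmap_Nil [simp]: "Fmap k b (j, []) = 0"
  by (cases b) simp

lemma matmul_Emap_Nil: "matmul (Emap k) m (i, []) c = 0"
  by (simp add: matmul_def)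

lemma matmul_Emap_Cons:
  "matmul (Emap k) m (i, t # r) c = (if t then m (i + 1, r) c else qq ^ i * m (i, r) c)"
proof -
  have "matmul (Emap k) m (i, t # r) c
      = (\<Sum>x\<in>{(if t then i + 1 else i, r)}. Emap k (i, t # r) x * m x c)"
    by (rule matmul_eq_sum[OF row_finite_Emap]) (auto split: if_splits)
  thus ?thesis by simp
qed

lemma matmul_Fmap:
  "matmul (Fmap k) m (i, r) c
   = Fcoeff_v0 k i * m (i, False # r) c + (if i \<ge> 1 then Fcoeff_v1 k i * m (i - 1, True # r) c else 0)"
proof -
  have "matmul (Fmap k) m (i, r) c
      = (\<Sum>x\<in>{(i, False # r), (i - 1, True # r)}. Fmap k (i, r) x * m x c)"
  proof (rule matmul_eq_sum[OF row_finite_Fmap])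
    fix x assume "Fmap k (i, r) x \<noteq> 0"
    thus "x \<in> {(i, False # r), (i - 1, True # r)}"
      by (cases x, rename_tac j s', case_tac s') (auto split: if_splits)
  qed auto
  thus ?thesis by auto
qed

lemma matmul_Emap_right:
  assumes "row_finite m"
  shows "matmul m (Emap k) b (j, r)
    = qq ^ j * m b (j, False # r) + (if j \<ge> 1 then m b (j - 1, True # r) else 0)"
proof -
  have "matmul m (Emap k) b (j, r) = (\<Sum>x\<in>{(j, False # r), (j - 1, True # r)}. m b x * Emap k x (j, r))"
  proof (rule matmul_eq_sum[OF assms])
    fix x assume "Emap k x (j, r) \<noteq> 0"
    thus "x \<in> {(j, False # r), (j - 1, True # r)}"
      by (cases x, rename_tac i s, case_tac s) (auto split: if_splits)
  qed auto
  thus ?thesis by (auto simp: mult.commute)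
qed

lemma matmul_Fmap_right_Nil: "matmul m (Fmap k) b (j, []) = 0"
  by (simp add: matmul_def)

lemma matmul_Fmap_right_Cons:
  assumes "row_finite m"
  shows "matmul m (Fmap k) b (j, u # r)
    = (if u then m b (j + 1, r) * Fcoeff_v1 k (j + 1) else m b (j, r) * Fcoeff_v0 k j)"
proof -
  have "matmul m (Fmap k) b (j, u # r)
      = (\<Sum>x\<in>{(if u then j + 1 else j, r)}. m b x * Fmap k x (j, u # r))"
    by (rule matmul_eq_sum[OF assms]) (auto split: if_splits)
  thus ?thesis by auto
qed

lemma matmul_eps_map:
  "matmul (eps_map i) m (a, s) c =
   (if i < length s then epsV (s ! (i - 1)) (s ! i) * m (a, take (i - 1) s @ drop (i + 1) s) c else 0)"
proof -
  have "matmul (eps_map i) m (a, s) c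
      = (\<Sum>x\<in>{(a, take (i - 1) s @ drop (i + 1) s)}. eps_map i (a, s) x * m x c)"
    by (rule matmul_eq_sum[OF row_finite_eps_map]) (auto simp: eps_map_def split: if_splits)
  thus ?thesis by (simp add: eps_map_def)
qed

lemma matmul_eta_map:
  "matmul (eta_map i) m (a, s) c =
   m (a, take (i - 1) s @ [False, True] @ drop (i - 1) s) c
   - inverse qq * m (a, take (i - 1) s @ [True, False] @ drop (i - 1) s) c"
proof -
  have "matmul (eta_map i) m (a, s) c
      = (\<Sum>x\<in>{(a, take (i - 1) s @ [False, True] @ drop (i - 1) s),
              (a, take (i - 1) s @ [True, False] @ drop (i - 1) s)}. eta_map i (a, s) x * m x c)"
    by (rule matmul_eq_sum[OF row_finite_eta_map]) (auto simp: eta_map_def split: if_splits)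
  thus ?thesis by (simp add: eta_map_def)
qed

text \<open>coprod_entry A d g t u is the matrix entry of g acting on X \<otimes> V_1, between basis vectors
x \<otimes> v_t and y \<otimes> v_u, through the coproduct, where A g' and d are the entries between x and y
of g' and of the identity on X.\<close>
fun coprod_entry :: "(gen \<Rightarrow> K) \<Rightarrow> K \<Rightarrow> gen \<Rightarrow> bool \<Rightarrow> bool \<Rightarrow> K" where
  "coprod_entry A d GK t u = A GK * Vmat GK t u"
| "coprod_entry A d GKi t u = A GKi * Vmat GKi t u"
| "coprod_entry A d GE t u = A GE * Vmat GK t u + d * Vmat GE t u"
| "coprod_entry A d GF t u = A GF * (if t = u then 1 else 0) + A GKi * Vmat GF t u"

text \<open>In both intertwining lemmas the list p (reversed) holds the tensor factors V_1 on which the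
map acts as the identity. For p = [] the statement is that E resp. F is a module map, checked
generator by generator; each further factor enters both sides through coprod_entry.\<close>

lemma TR_Emap_intertwine:
  "qq ^ j * TR k g i (p @ [t]) j (p' @ [False]) + (if j \<ge> 1 then TR k g i (p @ [t]) (j - 1) (p' @ [True]) else 0)
   = (if t then TR (k + 1) g (i + 1) p j p' else qq ^ i * TR (k + 1) g i p j p')"
proof (induction p arbitrary: p' g)
  case Nil
  show ?case
  proof (cases p')
    case Nil
    show ?thesis
      by (cases g; cases t; cases i)
         (simp_all add: Nil Suc_le_eq qq_field_normal, simp_all add: field_simps,
          auto simp: qd_def algebra_simps eval_nat_numeral)
  qed (cases g, auto simp: TR_length_neq)
next
  case (Cons x p)
  show ?case
  proof (cases p')
    case (Cons y r)
    define L where "L g' = qq ^ j * TR k g' i (p @ [t]) j (r @ [False])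
      + (if j \<ge> 1 then TR k g' i (p @ [t]) (j - 1) (r @ [True]) else 0)" for g'
    define R where "R g' = (if t then TR (k + 1) g' (i + 1) p j r else qq ^ i * TR (k + 1) g' i p j r)" for g'
    have "L = R" unfolding L_def R_def using Cons.IH by blast
    have "qq ^ j * TR k g i ((x # p) @ [t]) j (p' @ [False])
        + (if j \<ge> 1 then TR k g i ((x # p) @ [t]) (j - 1) (p' @ [True]) else 0)
      = coprod_entry L (qq ^ j * (if i = j \<and> p @ [t] = r @ [False] then 1 else 0)
          + (if j \<ge> 1 then (if i = j - 1 \<and> p @ [t] = r @ [True] then 1 else 0) else 0)) g x y"
      unfolding L_def Cons by (cases g) (simp_all add: algebra_simps)
    also have "\<dots> = coprod_entry R (if t then (if i + 1 = j \<and> p = r then 1 else 0)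
          else qq ^ i * (if i = j \<and> p = r then 1 else 0)) g x y"
      using \<open>L = R\<close> by (cases t) auto
    also have "\<dots> = (if t then TR (k + 1) g (i + 1) (x # p) j p' else qq ^ i * TR (k + 1) g i (x # p) j p')"
      unfolding R_def Cons by (cases g) (simp_all add: algebra_simps)
    finally show ?thesis .
  qed (cases g, auto simp: TR_length_neq)
qed

lemma TR_Fmap_intertwine:
  "(if u then TR (k + 1) g i p (j + 1) p' * Fcoeff_v1 k (j + 1) else TR (k + 1) g i p j p' * Fcoeff_v0 k j)
   = Fcoeff_v0 k i * TR k g i (p @ [False]) j (p' @ [u])
     + (if i \<ge> 1 then Fcoeff_v1 k i * TR k g (i - 1) (p @ [True]) j (p' @ [u]) else 0)"
proof (induction p arbitrary: p' g)
  case Nil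
  show ?case
  proof (cases p')
    case Nil
    show ?thesis
      by (cases g; cases u; cases i)
         (simp_all add: Nil Suc_le_eq qq_field_normal, simp_all add: field_simps,
          auto simp: qd_def algebra_simps eval_nat_numeral)
  qed (cases g, auto simp: TR_length_neq)
next
  case (Cons x p)
  show ?case
  proof (cases p')
    case (Cons y r)
    define L where "L g' = (if u then TR (k + 1) g' i p (j + 1) r * Fcoeff_v1 k (j + 1)
      else TR (k + 1) g' i p j r * Fcoeff_v0 k j)" for g'
    define R where "R g' = Fcoeff_v0 k i * TR k g' i (p @ [False]) j (r @ [u])
      + (if i \<ge> 1 then Fcoeff_v1 k i * TR k g' (i - 1) (p @ [True]) j (r @ [u]) else 0)" for g'
    have "L = R" unfolding L_def R_def using Cons.IH by blast
    have "(if u then TR (k + 1) g i (x # p) (j + 1) p' * Fcoeff_v1 k (j + 1)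
          else TR (k + 1) g i (x # p) j p' * Fcoeff_v0 k j)
      = coprod_entry L (if u then (if i = j + 1 \<and> p = r then 1 else 0) * Fcoeff_v1 k (j + 1)
          else (if i = j \<and> p = r then 1 else 0) * Fcoeff_v0 k j) g x y"
      unfolding L_def Cons by (cases g) (simp_all add: algebra_simps)
    also have "\<dots> = coprod_entry R (Fcoeff_v0 k i * (if i = j \<and> p @ [False] = r @ [u] then 1 else 0)
          + (if i \<ge> 1 then Fcoeff_v1 k i * (if i - 1 = j \<and> p @ [True] = r @ [u] then 1 else 0) else 0)) g x y"
      using \<open>L = R\<close> by (cases u) auto
    also have "\<dots> = Fcoeff_v0 k i * TR k g i ((x # p) @ [False]) j (p' @ [u])
      + (if i \<ge> 1 then Fcoeff_v1 k i * TR k g (i - 1) ((x # p) @ [True]) j (p' @ [u]) else 0)"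
      unfolding R_def Cons by (cases g) (simp_all add: algebra_simps)
    finally show ?thesis .
  qed (cases g, auto simp: TR_length_neq)
qed

lemma Emap_act:
  assumes "finite (supp v)"
  shows "lin (Emap k') (act k g v) = act (k + 1) g (lin (Emap k') v)"
proof -
  have "matmul (act_matrix k g) (Emap k') = matmul (Emap k') (act_matrix (k + 1) g)"
  proof (intro ext)
    fix b c :: "nat \<times> bool list"
    obtain i s where b: "b = (i, s)" by (cases b)
    obtain j r' where c: "c = (j, r')" by (cases c)
    show "matmul (act_matrix k g) (Emap k') b c = matmul (Emap k') (act_matrix (k + 1) g) b c"
    proof (cases s)
      case Nil
      thus ?thesis by (simp add: b c matmul_Emap_right[OF row_finite_act_matrix] matmul_Emap_Nil TR_length_neq)
    next
      case (Cons t r)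
      have "matmul (act_matrix k g) (Emap k') b c
          = qq ^ j * TR k g i (rev r @ [t]) j (rev r' @ [False])
            + (if j \<ge> 1 then TR k g i (rev r @ [t]) (j - 1) (rev r' @ [True]) else 0)"
        by (simp add: b c Cons matmul_Emap_right[OF row_finite_act_matrix])
      also have "\<dots> = (if t then TR (k + 1) g (i + 1) (rev r) j (rev r')
                        else qq ^ i * TR (k + 1) g i (rev r) j (rev r'))"
        by (rule TR_Emap_intertwine)
      also have "\<dots> = matmul (Emap k') (act_matrix (k + 1) g) b c"
        by (simp add: b c Cons matmul_Emap_Cons)
      finally show ?thesis .
    qed
  qed
  thus ?thesis
    by (simp add: act_eq_lin lin_lin[OF assms row_finite_act_matrix] lin_lin[OF assms row_finite_Emap])
qed

lemma Fmap_act: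
  assumes "finite (supp v)"
  shows "lin (Fmap k) (act (k + 1) g v) = act k g (lin (Fmap k) v)"
proof -
  have "matmul (act_matrix (k + 1) g) (Fmap k) = matmul (Fmap k) (act_matrix k g)"
  proof (intro ext)
    fix b c :: "nat \<times> bool list"
    obtain i r where b: "b = (i, r)" by (cases b)
    obtain j s' where c: "c = (j, s')" by (cases c)
    show "matmul (act_matrix (k + 1) g) (Fmap k) b c = matmul (Fmap k) (act_matrix k g) b c"
    proof (cases s')
      case Nil
      thus ?thesis by (simp add: b c matmul_Fmap_right_Nil matmul_Fmap TR_length_neq)
    next
      case (Cons u r')
      have "matmul (act_matrix (k + 1) g) (Fmap k) b c
          = (if u then TR (k + 1) g i (rev r) (j + 1) (rev r') * Fcoeff_v1 k (j + 1)
             else TR (k + 1) g i (rev r) j (rev r') * Fcoeff_v0 k j)"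
        by (simp add: b c Cons matmul_Fmap_right_Cons[OF row_finite_act_matrix])
      also have "\<dots> = Fcoeff_v0 k i * TR k g i (rev r @ [False]) j (rev r' @ [u])
          + (if i \<ge> 1 then Fcoeff_v1 k i * TR k g (i - 1) (rev r @ [True]) j (rev r' @ [u]) else 0)"
        by (rule TR_Fmap_intertwine)
      also have "\<dots> = matmul (Fmap k) (act_matrix k g) b c"
        by (simp add: b c Cons matmul_Fmap)
      finally show ?thesis .
    qed
  qed
  thus ?thesis
    by (simp add: act_eq_lin lin_lin[OF assms row_finite_act_matrix] lin_lin[OF assms row_finite_Fmap])
qed

lemma Emap_Fmap:
  assumes "finite (supp v)"
  shows "lin (Emap k') (lin (Fmap k) v) = (\<lambda>b. qbr (k + 1) * v b)"
proof -
  have coeff: "Fcoeff_v0 k i * qq ^ i + (if i \<ge> 1 then Fcoeff_v1 k i else 0) = qbr (k + 1)" for i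
    by (cases i) (simp_all add: Suc_le_eq qq_field_normal, simp_all add: field_simps)
  have "matmul (Fmap k) (Emap k') = (\<lambda>b c. if c = b then qbr (k + 1) else 0)"
  proof (intro ext)
    fix b c :: "nat \<times> bool list"
    obtain i r where b: "b = (i, r)" by (cases b)
    obtain j s where c: "c = (j, s)" by (cases c)
    show "matmul (Fmap k) (Emap k') b c = (if c = b then qbr (k + 1) else 0)"
      using coeff[of i] by (cases i) (auto simp: b c matmul_Fmap)
  qed
  hence "lin (Emap k') (lin (Fmap k) v) = lin (\<lambda>b c. if c = b then qbr (k + 1) else 0) v"
    by (simp add: lin_lin[OF assms row_finite_Fmap])
  also have "\<dots> = (\<lambda>b. qbr (k + 1) * v b)" by (rule lin_scalar_matrix[OF assms])
  finally show ?thesis .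
qed

text \<open>Echain a n = E_{mu+a+n-1} \<circ> ... \<circ> E_{mu+a} and Fchain a n = F_{mu+a} \<circ> ... \<circ> F_{mu+a+n-1},
each factor acting on the leading tensor factors.\<close>
definition Echain :: "nat \<Rightarrow> nat \<Rightarrow> (nat \<times> bool list \<Rightarrow> K) \<Rightarrow> (nat \<times> bool list \<Rightarrow> K)" where
  "Echain a n v = fold (\<lambda>j w. lin (Emap (int j)) w) [a..<a + n] v"

definition Fchain :: "nat \<Rightarrow> nat \<Rightarrow> (nat \<times> bool list \<Rightarrow> K) \<Rightarrow> (nat \<times> bool list \<Rightarrow> K)" where
  "Fchain a n v = fold (\<lambda>j w. lin (Fmap (int j)) w) (rev [a..<a + n]) v"

lemma Echain_0 [simp]: "Echain a 0 v = v"
  by (simp add: Echain_def)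

lemma Fchain_0 [simp]: "Fchain a 0 v = v"
  by (simp add: Fchain_def)

lemma Echain_Suc: "Echain a (Suc n) v = lin (Emap (int (a + n))) (Echain a n v)"
  by (simp add: Echain_def)

lemma Echain_Suc_left: "Echain a (Suc n) v = Echain (Suc a) n (lin (Emap (int a)) v)"
  by (simp add: Echain_def upt_rec)

lemma Fchain_Suc: "Fchain a (Suc n) v = Fchain a n (lin (Fmap (int (a + n))) v)"
  by (simp add: Fchain_def)

lemma Fchain_Suc_left: "Fchain a (Suc n) v = lin (Fmap (int a)) (Fchain (Suc a) n v)"
  by (simp add: Fchain_def upt_rec)

lemma finite_supp_Echain: "finite (supp v) \<Longrightarrow> finite (supp (Echain a n v))"
  by (induction n) (auto simp: Echain_Suc intro!: finite_supp_lin row_finite_Emap)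

lemma finite_supp_Fchain: "finite (supp v) \<Longrightarrow> finite (supp (Fchain a n v))"
  by (induction n arbitrary: v) (auto simp: Fchain_Suc intro!: finite_supp_lin row_finite_Fmap)

lemma Echain_lincomb:
  "finite (supp v) \<Longrightarrow> finite (supp w) \<Longrightarrow>
   Echain a n (\<lambda>b. c * v b + w b) = (\<lambda>b. c * Echain a n v b + Echain a n w b)"
  by (induction n) (auto simp: Echain_Suc lin_lincomb finite_supp_Echain)

lemma Fchain_lincomb:
  "finite (supp v) \<Longrightarrow> finite (supp w) \<Longrightarrow>
   Fchain a n (\<lambda>b. c * v b + w b) = (\<lambda>b. c * Fchain a n v b + Fchain a n w b)"
  by (induction n arbitrary: v w) (auto simp: Fchain_Suc lin_lincomb finite_supp_lin row_finite_Fmap)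

lemma Echain_zero [simp]: "Echain a n (\<lambda>_. 0) = (\<lambda>_. 0)"
  by (induction n) (simp_all add: Echain_Suc)

lemma Fchain_zero [simp]: "Fchain a n (\<lambda>_. 0) = (\<lambda>_. 0)"
  by (induction n) (simp_all add: Fchain_Suc)

lemma Echain_scale: "Echain a n (\<lambda>b. c * v b) = (\<lambda>b. c * Echain a n v b)"
  by (induction n) (simp_all add: Echain_Suc lin_scale)

lemma Fchain_scale: "Fchain a n (\<lambda>b. c * v b) = (\<lambda>b. c * Fchain a n v b)"
  by (induction n arbitrary: v) (simp_all add: Fchain_Suc lin_scale)

lemma Emap_in_Vsp:
  assumes "v \<in> Vsp (Suc n)"
  shows "lin (Emap k) v \<in> Vsp n"
proof (rule lin_in_Vsp[OF assms row_finite_Emap])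
  fix b c :: "nat \<times> bool list"
  assume "length (snd b) = Suc n" "Emap k b c \<noteq> 0"
  thus "length (snd c) = n" by (cases b; cases c; cases "snd b") (auto split: if_splits)
qed

lemma Fmap_in_Vsp:
  assumes "v \<in> Vsp n"
  shows "lin (Fmap k) v \<in> Vsp (Suc n)"
proof (rule lin_in_Vsp[OF assms row_finite_Fmap])
  fix b c :: "nat \<times> bool list"
  assume "length (snd b) = n" "Fmap k b c \<noteq> 0"
  thus "length (snd c) = Suc n" by (cases b; cases c; cases "snd c") (auto split: if_splits)
qed

lemma Echain_in_Vsp: "v \<in> Vsp (m + n) \<Longrightarrow> Echain a n v \<in> Vsp m"
  by (induction n arbitrary: m) (auto simp: Echain_Suc intro: Emap_in_Vsp)

lemma Fchain_in_Vsp: "v \<in> Vsp m \<Longrightarrow> Fchain a n v \<in> Vsp (m + n)"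
proof (induction n arbitrary: v m)
  case (Suc n)
  have "Fchain a n (lin (Fmap (int (a + n))) v) \<in> Vsp (Suc m + n)"
    by (rule Suc.IH[OF Fmap_in_Vsp[OF Suc.prems]])
  thus ?case by (simp add: Fchain_Suc)
qed simp

lemma Echain_Fchain:
  "finite (supp w) \<Longrightarrow> Echain a n (Fchain a n w) = (\<lambda>b. (\<Prod>j=Suc a..a + n. qbr (int j)) * w b)"
proof (induction n arbitrary: w)
  case (Suc n)
  have "Echain a (Suc n) (Fchain a (Suc n) w)
      = lin (Emap (int (a + n))) (Echain a n (Fchain a n (lin (Fmap (int (a + n))) w)))"
    by (simp add: Echain_Suc Fchain_Suc)
  also have "\<dots> = lin (Emap (int (a + n))) (\<lambda>b. (\<Prod>j=Suc a..a + n. qbr (int j)) * lin (Fmap (int (a + n))) w b)"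
    by (simp add: Suc.IH finite_supp_lin[OF Suc.prems row_finite_Fmap])
  also have "\<dots> = (\<lambda>b. (\<Prod>j=Suc a..a + n. qbr (int j)) * (qbr (int (a + n) + 1) * w b))"
    by (simp add: lin_scale Emap_Fmap[OF Suc.prems])
  also have "\<dots> = (\<lambda>b. (\<Prod>j=Suc a..a + Suc n. qbr (int j)) * w b)"
    by (simp add: prod.nat_ivl_Suc' mult_ac add.commute)
  finally show ?case .
qed simp

lemma Echain_act:
  "finite (supp v) \<Longrightarrow> Echain a n (act (int a) g v) = act (int (a + n)) g (Echain a n v)"
  by (induction n) (simp_all add: Echain_Suc Emap_act finite_supp_Echain add.commute)

lemma Fchain_act:
  "finite (supp v) \<Longrightarrow> Fchain a n (act (int (a + n)) g v) = act (int a) g (Fchain a n v)"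
proof (induction n arbitrary: v)
  case (Suc n)
  have "Fchain a (Suc n) (act (int (a + Suc n)) g v)
      = Fchain a n (lin (Fmap (int (a + n))) (act (int (a + n) + 1) g v))"
    by (simp add: Fchain_Suc add.commute)
  also have "\<dots> = Fchain a n (act (int (a + n)) g (lin (Fmap (int (a + n))) v))"
    by (simp add: Fmap_act Suc.prems)
  also have "\<dots> = act (int a) g (Fchain a n (lin (Fmap (int (a + n))) v))"
    by (rule Suc.IH[OF finite_supp_lin[OF Suc.prems row_finite_Fmap]])
  also have "\<dots> = act (int a) g (Fchain a (Suc n) v)"
    by (simp only: Fchain_Suc)
  finally show ?case .
qed simp

lemma eps_map_apply:
  "eps_map i (a, s) (b, s') =
   (if b = a \<and> i < length s \<and> s' = take (i - 1) s @ drop (i + 1) s then epsV (s ! (i - 1)) (s ! i) else 0)"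
  by (simp add: eps_map_def)

lemma eta_map_apply:
  "eta_map i (a, s) (b, s') =
   (if b = a \<and> s' = take (i - 1) s @ [False, True] @ drop (i - 1) s then 1
    else if b = a \<and> s' = take (i - 1) s @ [True, False] @ drop (i - 1) s then - inverse qq else 0)"
  by (simp add: eta_map_def)

lemma eps_map_Suc_Fmap:
  assumes "finite (supp v)" "i \<ge> 1"
  shows "lin (eps_map (Suc i)) (lin (Fmap k) v) = lin (Fmap k) (lin (eps_map i) v)"
proof -
  have "matmul (Fmap k) (eps_map (Suc i)) = matmul (eps_map i) (Fmap k)"
  proof (intro ext)
    fix b c :: "nat \<times> bool list"
    obtain a r where b: "b = (a, r)" by (cases b)
    obtain j s where c: "c = (j, s)" by (cases c)
    obtain i' where i: "i = Suc i'" using assms(2) by (cases i) auto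
    show "matmul (Fmap k) (eps_map (Suc i)) b c = matmul (eps_map i) (Fmap k) b c"
      by (cases s) (auto simp: b c i matmul_Fmap matmul_eps_map eps_map_apply)
  qed
  thus ?thesis
    by (simp add: lin_lin[OF assms(1) row_finite_Fmap] lin_lin[OF assms(1) row_finite_eps_map])
qed

text \<open>In F_lambda (F_{lambda+1} v_i) the coefficient of v_{i-1} \<otimes> v_0 \<otimes> v_1 is q^{-1} times
that of v_{i-1} \<otimes> v_1 \<otimes> v_0, while epsilon (v_0 \<otimes> v_1) = -q epsilon (v_1 \<otimes> v_0).\<close>
lemma eps_map_1_Fmap_Fmap:
  assumes "finite (supp v)"
  shows "lin (eps_map 1) (lin (Fmap (int a)) (lin (Fmap (int (Suc a))) v)) = (\<lambda>_. 0)"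
proof -
  have "lin (eps_map 1) (lin (Fmap (int a)) (lin (Fmap (int (Suc a))) v))
      = lin (matmul (Fmap (int (Suc a))) (matmul (Fmap (int a)) (eps_map 1))) v"
    by (subst lin_lin[OF finite_supp_lin[OF assms row_finite_Fmap] row_finite_Fmap])
       (rule lin_lin[OF assms row_finite_Fmap])
  also have "\<dots> = (\<lambda>_. 0)"
  proof (rule lin_eq_zeroI)
    fix b c :: "nat \<times> bool list"
    obtain i r where b: "b = (i, r)" by (cases b)
    obtain j s where c: "c = (j, s)" by (cases c)
    show "matmul (Fmap (int (Suc a))) (matmul (Fmap (int a)) (eps_map 1)) b c = 0"
      by (cases i) (auto simp: b c matmul_Fmap matmul_eps_map eps_map_apply power_int_diff power_int_add algebra_simps)
  qed
  finally show ?thesis .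
qed

lemma Emap_eta_map_Suc:
  assumes "finite (supp w)" "i \<ge> 1" "\<And>b. b \<in> supp w \<Longrightarrow> snd b \<noteq> []"
  shows "lin (Emap k) (lin (eta_map (Suc i)) w) = lin (eta_map i) (lin (Emap k) w)"
proof -
  have "lin (Emap k) (lin (eta_map (Suc i)) w) = lin (matmul (eta_map (Suc i)) (Emap k)) w"
    by (rule lin_lin[OF assms(1) row_finite_eta_map])
  also have "\<dots> = lin (matmul (Emap k) (eta_map i)) w"
  proof (rule lin_cong, intro ext)
    fix b c :: "nat \<times> bool list"
    assume "b \<in> supp w"
    then obtain a t r where b: "b = (a, t # r)" using assms(3) by (cases b; cases "snd b") force+
    obtain j s where c: "c = (j, s)" by (cases c)
    obtain i' where i: "i = Suc i'" using assms(2) by (cases i) auto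
    show "matmul (eta_map (Suc i)) (Emap k) b c = matmul (Emap k) (eta_map i) b c"
      by (auto simp: b c i matmul_eta_map matmul_Emap_Cons eta_map_apply)
  qed
  also have "\<dots> = lin (eta_map i) (lin (Emap k) w)"
    by (rule lin_lin[OF assms(1) row_finite_Emap, symmetric])
  finally show ?thesis .
qed

text \<open>E_{lambda+1} E_lambda maps v_i \<otimes> v_0 \<otimes> v_1 and q^{-1} v_i \<otimes> v_1 \<otimes> v_0 both to q^i v_{i+1}.\<close>
lemma Emap_Emap_eta_map_1:
  assumes "finite (supp w)"
  shows "lin (Emap k') (lin (Emap k) (lin (eta_map 1) w)) = (\<lambda>_. 0)"
proof -
  have "lin (Emap k') (lin (Emap k) (lin (eta_map 1) w))
      = lin (matmul (eta_map 1) (matmul (Emap k) (Emap k'))) w"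
    by (subst lin_lin[OF finite_supp_lin[OF assms row_finite_eta_map] row_finite_Emap])
       (rule lin_lin[OF assms row_finite_eta_map])
  also have "\<dots> = (\<lambda>_. 0)"
  proof (rule lin_eq_zeroI)
    fix b c :: "nat \<times> bool list"
    obtain i r where b: "b = (i, r)" by (cases b)
    obtain j s where c: "c = (j, s)" by (cases c)
    show "matmul (eta_map 1) (matmul (Emap k) (Emap k')) b c = 0"
      by (auto simp: b c matmul_eta_map matmul_Emap_Cons)
  qed
  finally show ?thesis .
qed

lemma eps_map_Fchain:
  "finite (supp w) \<Longrightarrow> 1 \<le> i \<Longrightarrow> i < n \<Longrightarrow> lin (eps_map i) (Fchain a n w) = (\<lambda>_. 0)"
proof (induction i arbitrary: a n)
  case (Suc i)
  show ?case
  proof (cases "i = 0")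
    case True
    then obtain m where n: "n = Suc (Suc m)" using Suc.prems by (cases n; cases "n - 1") auto
    show ?thesis
      using eps_map_1_Fmap_Fmap[OF finite_supp_Fchain[OF Suc.prems(1)]]
      by (simp add: True n Fchain_Suc_left)
  next
    case False
    then obtain m where n: "n = Suc m" using Suc.prems by (cases n) auto
    have "lin (eps_map (Suc i)) (Fchain a n w)
        = lin (Fmap (int a)) (lin (eps_map i) (Fchain (Suc a) m w))"
      using False by (simp add: n Fchain_Suc_left eps_map_Suc_Fmap finite_supp_Fchain Suc.prems)
    also have "\<dots> = (\<lambda>_. 0)"
      using Suc.IH[OF Suc.prems(1)] False Suc.prems n by simp
    finally show ?thesis .
  qed
qed simp

lemma Echain_eta_map:
  "w \<in> Vsp m \<Longrightarrow> 1 \<le> i \<Longrightarrow> i < n \<Longrightarrow> i \<le> m + 1 \<Longrightarrow> Echain a n (lin (eta_map i) w) = (\<lambda>_. 0)"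
proof (induction i arbitrary: a n w m)
  case (Suc i)
  have w: "finite (supp w)" using Suc.prems(1) by (simp add: Vsp_iff)
  show ?case
  proof (cases "i = 0")
    case True
    then obtain n' where n: "n = Suc (Suc n')" using Suc.prems by (cases n; cases "n - 1") auto
    show ?thesis
      using Emap_Emap_eta_map_1[OF w] by (simp add: True n Echain_Suc_left)
  next
    case False
    then obtain n' where n: "n = Suc n'" using Suc.prems by (cases n) auto
    obtain m' where m: "m = Suc m'" using Suc.prems False by (cases m) auto
    have nonempty: "snd b \<noteq> []" if "b \<in> supp w" for b
      using Suc.prems(1) that m by (auto simp: Vsp_iff)
    have "Echain a n (lin (eta_map (Suc i)) w) = Echain (Suc a) n' (lin (eta_map i) (lin (Emap (int a)) w))"
      using Emap_eta_map_Suc[OF w _ nonempty] False by (simp add: n Echain_Suc_left)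
    also have "\<dots> = (\<lambda>_. 0)"
      using Suc.IH[OF Emap_in_Vsp] Suc.prems False n m by simp
    finally show ?thesis .
  qed
qed simp

lemma Pmap_eq_Fchain_Echain:
  "Pmap n v = (\<lambda>b. inverse (\<Prod>j=1..n. qbr (int j)) * Fchain 0 n (Echain 0 n v) b)"
  by (simp add: Pmap_def Ecomp_def Fcomp_def Echain_def Fchain_def)

lemma Pmap_in_Vsp: "v \<in> Vsp n \<Longrightarrow> Pmap n v \<in> Vsp n"
  using Fchain_in_Vsp[OF Echain_in_Vsp[of v 0 n]]
  by (simp add: Pmap_eq_Fchain_Echain scale_in_Vsp)

lemma Pmap_lincomb:
  assumes "finite (supp v)" "finite (supp w)"
  shows "Pmap n (\<lambda>b. c * v b + w b) = (\<lambda>b. c * Pmap n v b + Pmap n w b)"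
proof -
  have "Fchain 0 n (Echain 0 n (\<lambda>b. c * v b + w b))
      = (\<lambda>b. c * Fchain 0 n (Echain 0 n v) b + Fchain 0 n (Echain 0 n w) b)"
    by (simp only: Echain_lincomb[OF assms] Fchain_lincomb finite_supp_Echain assms)
  thus ?thesis by (simp add: Pmap_eq_Fchain_Echain algebra_simps)
qed

lemma Pmap_act: "finite (supp v) \<Longrightarrow> Pmap n (act 0 g v) = act 0 g (Pmap n v)"
  using Echain_act[of v 0 n g] Fchain_act[of "Echain 0 n v" 0 n g]
  by (simp add: Pmap_eq_Fchain_Echain act_eq_lin lin_scale finite_supp_Echain)

lemma Pmap_idem:
  assumes "finite (supp v)"
  shows "Pmap n (Pmap n v) = Pmap n v"
proof -
  define d where "d = (\<Prod>j=1..n. qbr (int j))"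
  have "d \<noteq> 0" unfolding d_def by (simp add: qbr_nonzero)
  have "Echain 0 n (Fchain 0 n (Echain 0 n v)) = (\<lambda>b. d * Echain 0 n v b)"
    using Echain_Fchain[OF finite_supp_Echain[OF assms], of 0 n 0] by (simp add: d_def)
  hence "Pmap n (Pmap n v) = (\<lambda>b. inverse d * ((inverse d * d) * Fchain 0 n (Echain 0 n v) b))"
    by (simp add: Pmap_eq_Fchain_Echain Echain_scale Fchain_scale d_def mult.assoc)
  with \<open>d \<noteq> 0\<close> show ?thesis by (simp add: Pmap_eq_Fchain_Echain d_def)
qed

lemma eps_map_Pmap: "finite (supp v) \<Longrightarrow> 1 \<le> i \<Longrightarrow> i < n \<Longrightarrow> lin (eps_map i) (Pmap n v) = (\<lambda>_. 0)"
  by (simp add: Pmap_eq_Fchain_Echain lin_scale eps_map_Fchain finite_supp_Echain)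

lemma Pmap_eta_map:
  "w \<in> Vsp (n - 2) \<Longrightarrow> 1 \<le> i \<Longrightarrow> i < n \<Longrightarrow> Pmap n (lin (eta_map i) w) = (\<lambda>_. 0)"
  by (simp add: Pmap_eq_Fchain_Echain Echain_eta_map)

theorem mainTheorem5:
  fixes n :: nat
  assumes "n \<ge> 1"
  shows "(\<forall>v\<in>Vsp n. Pmap n v \<in> Vsp n)
    \<and> (\<forall>v\<in>Vsp n. \<forall>w\<in>Vsp n. \<forall>c::K.
          Pmap n (\<lambda>b. c * v b + w b) = (\<lambda>b. c * Pmap n v b + Pmap n w b))
    \<and> (\<forall>g. \<forall>v\<in>Vsp n. Pmap n (act 0 g v) = act 0 g (Pmap n v))
    \<and> (\<forall>v\<in>Vsp n. Pmap n (Pmap n v) = Pmap n v)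
    \<and> (n \<ge> 2 \<longrightarrow> (\<forall>i. 1 \<le> i \<and> i \<le> n - 1 \<longrightarrow>
          (\<forall>v\<in>Vsp n. lin (eps_map i) (Pmap n v) = (\<lambda>_. 0))
        \<and> (\<forall>w\<in>Vsp (n - 2). Pmap n (lin (eta_map i) w) = (\<lambda>_. 0))))"
proof -
  have fin: "\<And>v. v \<in> Vsp n \<Longrightarrow> finite (supp v)" by (rule Vsp_finite_supp)
  show ?thesis
    using assms by (auto simp: fin Pmap_in_Vsp Pmap_lincomb Pmap_act Pmap_idem eps_map_Pmap Pmap_eta_map)
qed

end
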